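(* Let $P=(V,\leq)$ be a poset whose incomparability graph is connected and locally finite. Then every chain of $P$ is order-embeddable into the chain $\mathbb{Z}$ of integers.
   Context: The incomparability graph of $P$ has vertex set $V$ and edges the pairs of distinct incomparable elements. A graph is locally finite if every vertex has finitely many neighbours. A chain of $P$ is a subset of pairwise comparable elements, with the induced order. *)

theory Defs
  imports Main
begin

definition partial_order_on' :: "'a set \<Rightarrow> ('a \<Rightarrow> 'a \<Rightarrow> bool) \<Rightarrow> bool" where
  "partial_order_on' V le \<longleftrightarrow>
     (\<forall>x\<in>V. le x x) \<and>
     (\<forall>x\<in>V. \<forall>y\<in>V. le x y \<and> le y x \<longrightarrow> x = y) \<and>
     (\<forall>x\<in>V. \<forall>y\<in>V. \<forall>z\<in>V. le x y \<and> le y z \<longrightarrow> le x z)"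

definition comparable :: "('a \<Rightarrow> 'a \<Rightarrow> bool) \<Rightarrow> 'a \<Rightarrow> 'a \<Rightarrow> bool" where
  "comparable le x y \<longleftrightarrow> le x y \<or> le y x"

definition incomp_edge :: "'a set \<Rightarrow> ('a \<Rightarrow> 'a \<Rightarrow> bool) \<Rightarrow> 'a \<Rightarrow> 'a \<Rightarrow> bool" where
  "incomp_edge V le x y \<longleftrightarrow> x \<in> V \<and> y \<in> V \<and> x \<noteq> y \<and> \<not> comparable le x y"

definition graph_connected :: "'a set \<Rightarrow> ('a \<Rightarrow> 'a \<Rightarrow> bool) \<Rightarrow> bool" where
  "graph_connected V E \<longleftrightarrow>
     (\<forall>x\<in>V. \<forall>y\<in>V. \<exists>p. p \<noteq> [] \<and> hd p = x \<and> last p = y \<and> set p \<subseteq> V \<and>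
        (\<forall>i. Suc i < length p \<longrightarrow> E (p ! i) (p ! Suc i)))"

definition locally_finite :: "'a set \<Rightarrow> ('a \<Rightarrow> 'a \<Rightarrow> bool) \<Rightarrow> bool" where
  "locally_finite V E \<longleftrightarrow> (\<forall>x\<in>V. finite {y\<in>V. E x y})"

definition is_chain :: "'a set \<Rightarrow> ('a \<Rightarrow> 'a \<Rightarrow> bool) \<Rightarrow> 'a set \<Rightarrow> bool" where
  "is_chain V le C \<longleftrightarrow> C \<subseteq> V \<and> (\<forall>x\<in>C. \<forall>y\<in>C. comparable le x y)"

definition order_embedding :: "'a set \<Rightarrow> ('a \<Rightarrow> 'a \<Rightarrow> bool) \<Rightarrow> 'b set \<Rightarrow> ('b \<Rightarrow> 'b \<Rightarrow> bool) \<Rightarrow> ('a \<Rightarrow> 'b) \<Rightarrow> bool" where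
  "order_embedding C le B leB f \<longleftrightarrow> f ` C \<subseteq> B \<and> inj_on f C \<and>
     (\<forall>x\<in>C. \<forall>y\<in>C. le x y \<longleftrightarrow> leB (f x) (f y))"

end

theory Submission
  imports Defs
begin

text \<open>If x and y are joined by a walk in the incomparability graph, every z with x \<le> z \<le> y
  lies on the walk or is adjacent to it: otherwise z is comparable to every vertex of the walk,
  and since consecutive vertices are incomparable, z stays above all of them, so y \<le> z and
  z = y. Hence in a connected, locally finite incomparability graph all intervals are finite.
  A chain with finite intervals embeds into the integers by sending z to the signed number of
  elements between a fixed base point and z.\<close>

definition interval :: "'a set \<Rightarrow> ('a \<Rightarrow> 'a \<Rightarrow> bool) \<Rightarrow> 'a \<Rightarrow> 'a \<Rightarrow> 'a set" where
  "interval V le a b = {z\<in>V. le a z \<and> le z b}"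

lemma partial_order_on'_subset:
  assumes "partial_order_on' V le" and "C \<subseteq> V"
  shows "partial_order_on' C le"
  using assms unfolding partial_order_on'_def by blast

lemma interval_mono_carrier: "C \<subseteq> V \<Longrightarrow> interval C le a b \<subseteq> interval V le a b"
  unfolding interval_def by blast

lemma walk_stays_below_comparable:
  assumes po: "partial_order_on' V le"
    and p: "set p \<subseteq> V" "\<And>i. Suc i < length p \<Longrightarrow> incomp_edge V le (p ! i) (p ! Suc i)"
    and z: "z \<in> V" "le (p ! 0) z" "\<And>v. v \<in> set p \<Longrightarrow> comparable le v z"
    and i: "i < length p"
  shows "le (p ! i) z"
  using i
proof (induction i)
  case 0
  then show ?case using z(2) by simp
next
  case (Suc i)
  have below: "le (p ! i) z" using Suc by simp
  have "\<not> le z (p ! Suc i)"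
  proof
    assume "le z (p ! Suc i)"
    with below have "le (p ! i) (p ! Suc i)"
      using po p(1) z(1) Suc.prems unfolding partial_order_on'_def
      by (meson Suc_lessD nth_mem subsetD)
    then show False
      using p(2)[OF Suc.prems] unfolding incomp_edge_def comparable_def by blast
  qed
  then show ?case
    using z(3)[of "p ! Suc i"] Suc.prems unfolding comparable_def by simp
qed

lemma interval_subset_walk_neighbourhood:
  assumes po: "partial_order_on' V le"
    and p: "p \<noteq> []" "set p \<subseteq> V"
      "\<And>i. Suc i < length p \<Longrightarrow> incomp_edge V le (p ! i) (p ! Suc i)"
  shows "interval V le (hd p) (last p) \<subseteq> set p \<union> (\<Union>v\<in>set p. {w\<in>V. incomp_edge V le v w})"
proof
  fix z assume "z \<in> interval V le (hd p) (last p)"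
  then have z: "z \<in> V" "le (p ! 0) z" "le z (last p)"
    using p(1) unfolding interval_def by (auto simp: hd_conv_nth)
  show "z \<in> set p \<union> (\<Union>v\<in>set p. {w\<in>V. incomp_edge V le v w})"
  proof (rule ccontr)
    assume off_walk: "z \<notin> set p \<union> (\<Union>v\<in>set p. {w\<in>V. incomp_edge V le v w})"
    then have "comparable le v z" if "v \<in> set p" for v
      using that z(1) p(2) unfolding incomp_edge_def by blast
    then have "le (p ! (length p - 1)) z"
      using walk_stays_below_comparable[OF po p(2,3) z(1,2)] p(1) by simp
    then have "le (last p) z" using p(1) by (simp add: last_conv_nth)
    then have "z = last p"
      using po z p unfolding partial_order_on'_def by (meson last_in_set subsetD)
    with off_walk p(1) show False by simp
  qed
qed

lemma finite_interval_if_incomparability_graph_connected_locally_finite: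
  assumes po: "partial_order_on' V le"
    and conn: "graph_connected V (incomp_edge V le)"
    and lf: "locally_finite V (incomp_edge V le)"
    and xy: "x \<in> V" "y \<in> V"
  shows "finite (interval V le x y)"
proof -
  obtain p where p: "p \<noteq> []" "hd p = x" "last p = y" "set p \<subseteq> V"
    and walk: "\<And>i. Suc i < length p \<Longrightarrow> incomp_edge V le (p ! i) (p ! Suc i)"
    using conn xy unfolding graph_connected_def by blast
  have "finite (set p \<union> (\<Union>v\<in>set p. {w\<in>V. incomp_edge V le v w}))"
    using lf p(4) unfolding locally_finite_def by auto
  moreover have "interval V le x y \<subseteq> set p \<union> (\<Union>v\<in>set p. {w\<in>V. incomp_edge V le v w})"
    using interval_subset_walk_neighbourhood[OF po p(1,4) walk] p(2,3) by simp
  ultimately show ?thesis by (rule finite_subset[rotated])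
qed

lemma order_embedding_int_if_strict_mono:
  fixes f :: "'a \<Rightarrow> int"
  assumes po: "partial_order_on' C le"
    and total: "\<forall>a\<in>C. \<forall>b\<in>C. comparable le a b"
    and strict: "\<And>a b. a \<in> C \<Longrightarrow> b \<in> C \<Longrightarrow> le a b \<Longrightarrow> a \<noteq> b \<Longrightarrow> f a < f b"
  shows "order_embedding C le UNIV (\<le>) f"
proof -
  have refl: "\<forall>a\<in>C. le a a" using po unfolding partial_order_on'_def by blast
  have "inj_on f C"
    by (rule inj_onI) (metis less_irrefl strict total comparable_def)
  moreover have "\<forall>a\<in>C. \<forall>b\<in>C. le a b \<longleftrightarrow> f a \<le> f b"
    by (metis less_le_not_le order_refl strict total refl comparable_def)
  ultimately show ?thesis unfolding order_embedding_def by simp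
qed

lemma interval_psubset_right:
  assumes "partial_order_on' C le" "a \<in> C" "b \<in> C" "c \<in> C" "le c a" "le a b" "a \<noteq> b"
  shows "interval C le c a \<subset> interval C le c b"
  using assms unfolding partial_order_on'_def interval_def by blast

lemma interval_psubset_left:
  assumes "partial_order_on' C le" "a \<in> C" "b \<in> C" "c \<in> C" "le b c" "le a b" "a \<noteq> b"
  shows "interval C le b c \<subset> interval C le a c"
  using assms unfolding partial_order_on'_def interval_def by blast

lemma chain_finite_intervals_order_embedding_int:
  assumes po: "partial_order_on' C le"
    and total: "\<forall>a\<in>C. \<forall>b\<in>C. comparable le a b"
    and fin: "\<And>a b. a \<in> C \<Longrightarrow> b \<in> C \<Longrightarrow> finite (interval C le a b)"
  shows "\<exists>f :: 'a \<Rightarrow> int. order_embedding C le UNIV (\<le>) f"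
proof (cases "C = {}")
  case True
  then show ?thesis by (simp add: order_embedding_def)
next
  case False
  then obtain c where c: "c \<in> C" by blast
  define f where "f z = (if le c z then int (card (interval C le c z))
                         else - int (card (interval C le z c)))" for z
  have "f a < f b" if ab: "a \<in> C" "b \<in> C" "le a b" "a \<noteq> b" for a b
  proof -
    have refl: "\<forall>x\<in>C. le x x" and trans: "\<forall>x\<in>C. \<forall>y\<in>C. \<forall>z\<in>C. le x y \<and> le y z \<longrightarrow> le x z"
      using po unfolding partial_order_on'_def by blast+
    consider "le c a" | "\<not> le c a" "le c b" | "\<not> le c a" "\<not> le c b" by blast
    then show ?thesis
    proof cases
      case 1
      have "card (interval C le c a) < card (interval C le c b)"
        using interval_psubset_right[OF po ab(1,2) c 1 ab(3,4)] fin[OF c ab(2)]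
        by (simp add: psubset_card_mono)
      moreover have "le c b" using 1 trans ab c by blast
      ultimately show ?thesis using 1 by (simp add: f_def)
    next
      case 2
      have "a \<in> interval C le a c"
        using 2 refl total ab c unfolding interval_def comparable_def by blast
      then have "card (interval C le a c) > 0"
        using fin[OF ab(1) c] by (auto simp: card_gt_0_iff)
      then show ?thesis using 2 by (simp add: f_def)
    next
      case 3
      then have "le b c" using total ab c unfolding comparable_def by blast
      then have "card (interval C le b c) < card (interval C le a c)"
        using interval_psubset_left[OF po ab(1,2) c _ ab(3,4)] fin[OF ab(1) c]
        by (simp add: psubset_card_mono)
      then show ?thesis using 3 by (simp add: f_def)
    qed
  qed
  then show ?thesis using order_embedding_int_if_strict_mono[OF po total] by blast
qed

theorem mainTheorem5:
  fixes V :: "'a set" and le :: "'a \<Rightarrow> 'a \<Rightarrow> bool"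
  assumes "partial_order_on' V le"
    and "graph_connected V (incomp_edge V le)"
    and "locally_finite V (incomp_edge V le)"
  shows "\<forall>C. is_chain V le C \<longrightarrow>
           (\<exists>f :: 'a \<Rightarrow> int. order_embedding C le UNIV (\<le>) f)"
proof (intro allI impI)
  fix C assume chain: "is_chain V le C"
  then have CV: "C \<subseteq> V" and total: "\<forall>a\<in>C. \<forall>b\<in>C. comparable le a b"
    unfolding is_chain_def by blast+
  have "finite (interval C le a b)" if "a \<in> C" "b \<in> C" for a b
    using finite_interval_if_incomparability_graph_connected_locally_finite[OF assms, of a b]
      interval_mono_carrier[OF CV] that CV by (meson finite_subset subsetD)
  then show "\<exists>f :: 'a \<Rightarrow> int. order_embedding C le UNIV (\<le>) f"
    using chain_finite_intervals_order_embedding_int[OF partial_order_on'_subset[OF assms(1) CV] total]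
    by blast
qed

end
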